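(* Let $f:\mathbb{R}^n\to\mathbb{R}$ and $g:\mathbb{R}^n\to(-\infty,\infty]$ satisfy the standing assumptions below, with $3\sigma>2L$, and let $\gamma$ satisfy \[ 0<\gamma<\frac{3\sigma-2L}{L^2}. \] Let $\{(y^t,z^t,x^t)\}$ be any sequence generated by the PR splitting iteration (defined below) from some $x^0\in\mathbb{R}^n$. Then the sequence $\{\mathcal{P}_\gamma(y^t,z^t,x^t)\}_{t\ge 1}$ is nonincreasing. Moreover, if the sequence $\{(y^t,z^t,x^t)\}$ has a cluster point $(y^*,z^*,x^* )$, then \[ \lim_{t\to\infty}\|x^{t+1}-x^t\| = 2\lim_{t\to\infty}\|z^{t+1}-y^{t+1}\| = 0, \] $z^*=y^*$, and $0\in\nabla f(z^* )+\partial g(z^* )$.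
   Context: Standing assumptions: $f:\mathbb{R}^n\to\mathbb{R}$ is differentiable and strongly convex with modulus at least $\sigma>0$ (i.e. $f-\frac{\sigma}{2}\|\cdot\|^2$ is convex), and $\nabla f$ is Lipschitz continuous with modulus at most $L>0$. The function $g:\mathbb{R}^n\to(-\infty,\infty]$ is proper and lower semicontinuous, and for the $\gamma>0$ used, the set $\operatorname{Argmin}_u\{\gamma g(u)+\frac12\|u-w\|^2\}$ is nonempty for every $w\in\mathbb{R}^n$. PR splitting iteration: given $x^0$ and $\gamma>0$, for $t=0,1,2,\dots$: $y^{t+1}=\operatorname{argmin}_y\{f(y)+\frac{1}{2\gamma}\|y-x^t\|^2\}$; $z^{t+1}\in\operatorname{Argmin}_z\{g(z)+\frac{1}{2\gamma}\|2y^{t+1}-x^t-z\|^2\}$ (any choice); $x^{t+1}=x^t+2(z^{t+1}-y^{t+1})$. Merit function: $\mathcal{P}_\gamma(y,z,x):=f(y)+g(z)-\frac{3}{2\gamma}\|y-z\|^2+\frac{1}{\gamma}\langle x-y,z-y\rangle$. $\partial g$ denotes the limiting (Mordukhovich) subdifferential: $v\in\partial g(x)$ iff there exist $x^t\to x$ with $g(x^t)\to g(x)$ and $v^t\to v$ such that $\liminf_{z\to x^t, z\neq x^t}\frac{g(z)-g(x^t)-\langle v^t,z-x^t\rangle}{\|z-x^t\|}\ge 0$ for each $t$. *)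

theory Defs
  imports "HOL-Analysis.Analysis"
begin

definition proper_fun :: "('a \<Rightarrow> ereal) \<Rightarrow> bool" where
  "proper_fun g \<longleftrightarrow> (\<forall>x. g x \<noteq> -\<infinity>) \<and> (\<exists>x. g x \<noteq> \<infinity>)"

definition lsc_fun :: "('a::topological_space \<Rightarrow> ereal) \<Rightarrow> bool" where
  "lsc_fun g \<longleftrightarrow> (\<forall>x. g x \<le> Liminf (at x) g)"

definition frechet_subgrad :: "('a::real_inner \<Rightarrow> ereal) \<Rightarrow> 'a \<Rightarrow> 'a \<Rightarrow> bool" where
  "frechet_subgrad g x v \<longleftrightarrow> \<bar>g x\<bar> \<noteq> \<infinity> \<and>
     Liminf (at x) (\<lambda>z. (g z - g x - ereal (v \<bullet> (z - x))) / ereal (norm (z - x))) \<ge> 0"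

definition limiting_subdiff :: "('a::real_inner \<Rightarrow> ereal) \<Rightarrow> 'a \<Rightarrow> 'a set" where
  "limiting_subdiff g x = {v. \<bar>g x\<bar> \<noteq> \<infinity> \<and>
     (\<exists>xs vs. xs \<longlonglongrightarrow> x \<and> (\<lambda>t. g (xs t)) \<longlonglongrightarrow> g x \<and> vs \<longlonglongrightarrow> v \<and>
        (\<forall>t. frechet_subgrad g (xs t) (vs t)))}"

definition merit :: "('a::real_inner \<Rightarrow> real) \<Rightarrow> ('a \<Rightarrow> ereal) \<Rightarrow> real \<Rightarrow> 'a \<Rightarrow> 'a \<Rightarrow> 'a \<Rightarrow> ereal" where
  "merit f g \<gamma> y z x = ereal (f y) + g z +
     ereal (- (3 / (2 * \<gamma>)) * (norm (y - z))\<^sup>2 + (1 / \<gamma>) * ((x - y) \<bullet> (z - y)))"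

end

theory Submission
  imports Defs
begin

text \<open>
  The first step of the iteration is a gradient step in disguise,
  x_t = y_{t+1} + \<gamma> \<nabla>f(y_{t+1}). Hence z_{t+1} is a proximal point of g at
  y_{t+1} - \<gamma> \<nabla>f(y_{t+1}), and z_t is the average of y_{t+1} and y_t corrected by
  \<gamma>/2 times the difference of their gradients. Testing the proximal problem for z_{t+1}
  with the competitor z_t and using strong convexity and the Lipschitz bound on \<nabla>f, the
  merit function drops by at least (\<sigma> - \<gamma> L^2)/2 \<parallel>y_{t+1} - y_t\<parallel>^2 per step; the step-size
  bound together with \<sigma> \<le> L makes this constant positive. Along a convergent subsequence,
  lower semicontinuity of g bounds the merit function from below, so the squared y-steps
  are summable, and with them z - y and the x-steps tend to 0. Finally, limits of proximal
  points are proximal points with convergent values of g, so the Frechet subgradients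
  (y_{t+1} - \<gamma> \<nabla>f(y_{t+1}) - z_{t+1}) / \<gamma> of g at z_{t+1} converge to the limiting
  subgradient -\<nabla>f(z*).
\<close>

definition prox_point :: "('a::real_inner \<Rightarrow> ereal) \<Rightarrow> real \<Rightarrow> 'a \<Rightarrow> 'a \<Rightarrow> bool" where
  "prox_point g \<gamma> w p \<longleftrightarrow>
     (\<forall>u. g p + ereal ((norm (w - p))\<^sup>2 / (2 * \<gamma>)) \<le> g u + ereal ((norm (w - u))\<^sup>2 / (2 * \<gamma>)))"

definition merit_coupling :: "real \<Rightarrow> 'a::real_inner \<Rightarrow> 'a \<Rightarrow> 'a \<Rightarrow> real" where
  "merit_coupling \<gamma> y z x = - (3 / (2 * \<gamma>)) * (norm (y - z))\<^sup>2 + (1 / \<gamma>) * ((x - y) \<bullet> (z - y))"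

lemma merit_eq_coupling:
  "merit f g \<gamma> y z x = ereal (f y) + g z + ereal (merit_coupling \<gamma> y z x)"
  by (simp add: merit_def merit_coupling_def)

lemma ereal_add_real_le_iff:
  fixes x y :: ereal
  shows "x + ereal a \<le> y + ereal b \<longleftrightarrow> x \<le> y + ereal (b - a)"
  by (cases x; cases y) auto

lemma strongly_convex_gradient_ineq:
  fixes f :: "'a::real_inner \<Rightarrow> real" and gf :: "'a \<Rightarrow> 'a"
  assumes grad: "\<And>u. (f has_derivative (\<lambda>h. gf u \<bullet> h)) (at u)"
    and strong_convex: "convex_on UNIV (\<lambda>u. f u - \<sigma> / 2 * (norm u)\<^sup>2)"
  shows "f a + gf a \<bullet> (b - a) + \<sigma> / 2 * (norm (b - a))\<^sup>2 \<le> f b"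
proof -
  define h where "h = (\<lambda>u. f u - \<sigma> / 2 * (norm u)\<^sup>2)"
  define \<phi> where "\<phi> = (\<lambda>s::real. h (a + s *\<^sub>R (b - a)))"
  have cvx: "convex_on UNIV \<phi>"
  proof (rule convex_onI)
    fix t s s' :: real assume t: "0 < t" "t < 1"
    have "a + ((1 - t) *\<^sub>R s + t *\<^sub>R s') *\<^sub>R (b - a)
        = (1 - t) *\<^sub>R (a + s *\<^sub>R (b - a)) + t *\<^sub>R (a + s' *\<^sub>R (b - a))"
      by (simp add: algebra_simps)
    then show "\<phi> ((1 - t) *\<^sub>R s + t *\<^sub>R s') \<le> (1 - t) * \<phi> s + t * \<phi> s'"
      unfolding \<phi>_def using convex_onD[OF strong_convex[folded h_def], of t] t by simp
  qed simp
  have h_deriv: "(h has_derivative (\<lambda>k. (gf u - \<sigma> *\<^sub>R u) \<bullet> k)) (at u)" for u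
  proof -
    have "((\<lambda>u. f u - \<sigma> / 2 * (u \<bullet> u)) has_derivative
           (\<lambda>k. gf u \<bullet> k - \<sigma> / 2 * (u \<bullet> k + k \<bullet> u))) (at u)"
      by (intro derivative_eq_intros) (auto intro: grad)
    then show ?thesis
      unfolding h_def power2_norm_eq_inner by (simp add: inner_commute algebra_simps inner_diff_left)
  qed
  have "(\<phi> has_derivative (\<lambda>s. (gf (a + 0 *\<^sub>R (b - a)) - \<sigma> *\<^sub>R (a + 0 *\<^sub>R (b - a))) \<bullet> (s *\<^sub>R (b - a)))) (at 0)"
    unfolding \<phi>_def
    by (rule has_derivative_compose[OF _ h_deriv, where f="\<lambda>s. a + s *\<^sub>R (b - a)"])
       (auto intro!: derivative_eq_intros)
  then have "(\<phi> has_field_derivative ((gf a - \<sigma> *\<^sub>R a) \<bullet> (b - a))) (at 0)"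
    by (simp add: has_field_derivative_def mult.commute[of _ "(gf a - \<sigma> *\<^sub>R a) \<bullet> (b - a)"])
  then have "((gf a - \<sigma> *\<^sub>R a) \<bullet> (b - a)) * (1 - 0) \<le> \<phi> 1 - \<phi> 0"
    by (intro convex_on_imp_above_tangent[OF cvx]) auto
  then show ?thesis
    unfolding \<phi>_def h_def power2_norm_eq_inner
    by (simp add: algebra_simps inner_commute)
qed

lemma strong_convexity_modulus_le_lipschitz:
  fixes f :: "'a::euclidean_space \<Rightarrow> real" and gf :: "'a \<Rightarrow> 'a"
  assumes grad: "\<And>u. (f has_derivative (\<lambda>h. gf u \<bullet> h)) (at u)"
    and strong_convex: "convex_on UNIV (\<lambda>u. f u - \<sigma> / 2 * (norm u)\<^sup>2)"
    and lipschitz: "\<And>u v. norm (gf u - gf v) \<le> L * norm (u - v)"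
  shows "\<sigma> \<le> L"
proof -
  obtain e :: 'a where "e \<in> Basis" using nonempty_Basis by blast
  then have e: "norm e = 1" by simp
  have "\<sigma> \<le> (gf e - gf 0) \<bullet> e"
    using strongly_convex_gradient_ineq[OF grad strong_convex, of 0 e]
      strongly_convex_gradient_ineq[OF grad strong_convex, of e 0] e
    by (simp add: inner_diff_left)
  also have "\<dots> \<le> norm (gf e - gf 0) * norm e" by (rule norm_cauchy_schwarz)
  also have "\<dots> \<le> L" using lipschitz[of e 0] e by simp
  finally show ?thesis .
qed

lemma proximal_step_optimality:
  fixes f :: "'a::real_inner \<Rightarrow> real" and gf :: "'a \<Rightarrow> 'a"
  assumes grad: "\<And>u. (f has_derivative (\<lambda>h. gf u \<bullet> h)) (at u)"
    and "\<gamma> > 0"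
    and min: "\<And>u. f p + (norm (p - w))\<^sup>2 / (2 * \<gamma>) \<le> f u + (norm (u - w))\<^sup>2 / (2 * \<gamma>)"
  shows "w = p + \<gamma> *\<^sub>R gf p"
proof -
  define \<phi> where "\<phi> = (\<lambda>u. f u + ((u - w) \<bullet> (u - w)) / (2 * \<gamma>))"
  have deriv: "(\<phi> has_derivative (\<lambda>h. gf p \<bullet> h + (h \<bullet> (p - w) + (p - w) \<bullet> h) / (2 * \<gamma>))) (at p)"
    unfolding \<phi>_def using \<open>\<gamma> > 0\<close> by (intro derivative_eq_intros) (auto intro: grad)
  have crit: "(\<lambda>h. gf p \<bullet> h + (h \<bullet> (p - w) + (p - w) \<bullet> h) / (2 * \<gamma>)) = (\<lambda>h. 0)"
    by (rule differential_zero_maxmin[OF _ _ deriv, of UNIV]) (use min in \<open>auto simp: \<phi>_def power2_norm_eq_inner\<close>)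
  have "(\<gamma> *\<^sub>R gf p + (p - w)) \<bullet> h = 0" for h
    using fun_cong[OF crit, of h] \<open>\<gamma> > 0\<close> by (simp add: inner_add_left inner_diff_left inner_commute[of h] field_simps)
  then have "\<gamma> *\<^sub>R gf p + (p - w) = 0" by (metis inner_eq_zero_iff)
  then show ?thesis by (simp add: algebra_simps)
qed

lemma lipschitz_tendsto:
  fixes h :: "'a::real_normed_vector \<Rightarrow> 'b::real_normed_vector"
  assumes lipschitz: "\<And>u v. norm (h u - h v) \<le> L * norm (u - v)"
    and "X \<longlonglongrightarrow> u"
  shows "(\<lambda>k. h (X k)) \<longlonglongrightarrow> h u"
proof -
  have "(\<lambda>k. L * norm (X k - u)) \<longlonglongrightarrow> 0"
    using \<open>X \<longlonglongrightarrow> u\<close> by (intro tendsto_mult_right_zero tendsto_norm_zero LIM_zero)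
  then have "(\<lambda>k. h (X k) - h u) \<longlonglongrightarrow> 0"
    by (rule Lim_null_comparison[rotated]) (simp add: lipschitz)
  then show ?thesis by (rule LIM_zero_cancel)
qed

lemma merit_coupling_after_step:
  fixes a b ga :: "'a::real_inner"
  assumes "\<gamma> > 0"
  shows "merit_coupling \<gamma> a b (a + \<gamma> *\<^sub>R ga + 2 *\<^sub>R (b - a))
    = (norm (a - \<gamma> *\<^sub>R ga - b))\<^sup>2 / (2 * \<gamma>) - \<gamma> / 2 * (norm ga)\<^sup>2"
  using assms unfolding merit_coupling_def power2_norm_eq_inner
  by (simp add: inner_add_left inner_add_right inner_diff_left inner_diff_right inner_commute field_simps)

lemma merit_coupling_at_average:
  fixes a a0 ga ga0 :: "'a::real_inner"
  assumes "\<gamma> > 0"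
  defines "b0 \<equiv> (1/2) *\<^sub>R (a + a0) + (\<gamma>/2) *\<^sub>R (ga - ga0)"
  shows "merit_coupling \<gamma> a0 b0 (a + \<gamma> *\<^sub>R ga)
    = (norm (a - \<gamma> *\<^sub>R ga - b0))\<^sup>2 / (2 * \<gamma>) - \<gamma> / 2 * (norm ga)\<^sup>2
      + ga \<bullet> (a - a0) - \<gamma> / 2 * (norm (ga - ga0))\<^sup>2"
  using assms unfolding b0_def merit_coupling_def power2_norm_eq_inner
  by (simp add: inner_add_left inner_add_right inner_diff_left inner_diff_right inner_commute field_simps)

lemma lsc_fun_eventually_gt:
  fixes g :: "'a::topological_space \<Rightarrow> ereal"
  assumes "lsc_fun g" "c < g w" "X \<longlonglongrightarrow> w"
  shows "eventually (\<lambda>k. c < g (X k)) sequentially"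
proof -
  have "c < Liminf (at w) g"
    using assms(1,2) unfolding lsc_fun_def by (metis order_less_le_trans)
  then have "eventually (\<lambda>v. c < g v) (at w)"
    using le_Liminf_iff[of "Liminf (at w) g" "at w" g] by auto
  then have "eventually (\<lambda>v. v \<noteq> w \<longrightarrow> c < g v) (nhds w)"
    by (simp add: eventually_at_filter)
  then have "eventually (\<lambda>v. c < g v) (nhds w)"
    by (rule eventually_mono) (use assms(2) in auto)
  then show ?thesis
    using assms(3) by (rule eventually_compose_filterlim)
qed

lemma lsc_fun_le_Liminf:
  fixes g :: "'a::topological_space \<Rightarrow> ereal"
  assumes "lsc_fun g" "X \<longlonglongrightarrow> w"
  shows "g w \<le> Liminf sequentially (\<lambda>k. g (X k))"
  using lsc_fun_eventually_gt[OF assms(1) _ assms(2)] by (simp add: le_Liminf_iff)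

lemma frechet_subgrad_quadratic_minorant:
  fixes g :: "'a::real_inner \<Rightarrow> ereal"
  assumes gp: "g p = ereal a"
    and minorant: "\<And>u. ereal (a + v \<bullet> (u - p) - c * (norm (u - p))\<^sup>2) \<le> g u"
  shows "frechet_subgrad g p v"
proof -
  have bound: "ereal (- c * norm (u - p)) \<le> (g u - g p - ereal (v \<bullet> (u - p))) / ereal (norm (u - p))"
    if "u \<noteq> p" for u
  proof (cases "g u")
    case (real b)
    have "a + v \<bullet> (u - p) - c * (norm (u - p))\<^sup>2 \<le> b"
      using minorant[of u] real by simp
    then have "- c * norm (u - p) \<le> (b - a - v \<bullet> (u - p)) / norm (u - p)"
      using that by (simp add: field_simps power2_eq_square)
    then show ?thesis using real gp that by simp
  next
    case PInf
    then show ?thesis using gp that by simp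
  next
    case MInf
    then show ?thesis using minorant[of u] by simp
  qed
  have "((\<lambda>u. ereal (- c * norm (u - p))) \<longlongrightarrow> ereal (- c * norm (p - p))) (at p)"
    by (intro tendsto_intros)
  then have "((\<lambda>u. ereal (- c * norm (u - p))) \<longlongrightarrow> 0) (at p)"
    by (simp only: diff_self norm_zero mult_zero_right zero_ereal_def)
  then have small: "eventually (\<lambda>u. e < ereal (- c * norm (u - p))) (at p)" if "e < 0" for e
    using that by (rule order_tendstoD(1))
  have "eventually (\<lambda>u. e < (g u - g p - ereal (v \<bullet> (u - p))) / ereal (norm (u - p))) (at p)"
    if "e < 0" for e
  proof -
    have "eventually (\<lambda>u. u \<noteq> p) (at p)" by (rule eventually_neq_at_within)
    with small[OF that] show ?thesis
    proof eventually_elim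
      case (elim u)
      then show ?case using bound[of u] by (meson order_less_le_trans)
    qed
  qed
  then show ?thesis
    unfolding frechet_subgrad_def using gp by (simp add: le_Liminf_iff)
qed

lemma prox_point_le:
  assumes "prox_point g \<gamma> w p"
  shows "g p \<le> g u + ereal (((norm (w - u))\<^sup>2 - (norm (w - p))\<^sup>2) / (2 * \<gamma>))"
  using assms unfolding prox_point_def by (simp add: ereal_add_real_le_iff diff_divide_distrib)

lemma prox_point_finite:
  assumes "proper_fun g" "prox_point g \<gamma> w p"
  shows "\<bar>g p\<bar> \<noteq> \<infinity>"
proof -
  obtain u where "g u \<noteq> \<infinity>" using assms(1) unfolding proper_fun_def by blast
  then have "g p \<noteq> \<infinity>" using prox_point_le[OF assms(2), of u] by auto
  then show ?thesis using assms(1) unfolding proper_fun_def by auto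
qed

lemma frechet_subgrad_prox_point:
  assumes "proper_fun g" "\<gamma> > 0" "prox_point g \<gamma> w p"
  shows "frechet_subgrad g p ((1 / \<gamma>) *\<^sub>R (w - p))"
proof -
  obtain a where a: "g p = ereal a" using prox_point_finite[OF assms(1,3)] by auto
  show ?thesis
  proof (rule frechet_subgrad_quadratic_minorant[of g p a])
    show "g p = ereal a" by (rule a)
  next
    fix u
    have "(norm (w - u))\<^sup>2 = (norm (w - p))\<^sup>2 - 2 * ((w - p) \<bullet> (u - p)) + (norm (u - p))\<^sup>2"
      unfolding power2_norm_eq_inner by (simp add: algebra_simps inner_commute)
    then have "((norm (w - u))\<^sup>2 - (norm (w - p))\<^sup>2) / (2 * \<gamma>)
        = - ((w - p) \<bullet> (u - p)) / \<gamma> + 1 / (2 * \<gamma>) * (norm (u - p))\<^sup>2"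
      using assms(2) by (simp add: field_simps)
    then show "ereal (a + ((1 / \<gamma>) *\<^sub>R (w - p)) \<bullet> (u - p) - 1 / (2 * \<gamma>) * (norm (u - p))\<^sup>2) \<le> g u"
      using prox_point_le[OF assms(3), of u] a by (cases "g u") auto
  qed
qed

lemma prox_point_limit:
  fixes g :: "'a::real_inner \<Rightarrow> ereal"
  assumes lsc: "lsc_fun g" and "\<gamma> > 0"
    and W: "W \<longlonglongrightarrow> w" and P: "P \<longlonglongrightarrow> p" and prox: "\<And>k. prox_point g \<gamma> (W k) (P k)"
  shows "prox_point g \<gamma> w p" and "(\<lambda>k. g (P k)) \<longlonglongrightarrow> g p"
proof -
  define e where "e u k = ((norm (W k - u))\<^sup>2 - (norm (W k - P k))\<^sup>2) / (2 * \<gamma>)" for u k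
  have lim: "(\<lambda>k. g u + ereal (e u k)) \<longlonglongrightarrow> g u + ereal (((norm (w - u))\<^sup>2 - (norm (w - p))\<^sup>2) / (2 * \<gamma>))"
    for u unfolding e_def using \<open>\<gamma> > 0\<close> by (intro tendsto_intros W P) auto
  have bound: "g (P k) \<le> g u + ereal (e u k)" for u k
    unfolding e_def by (rule prox_point_le[OF prox])
  have liminf: "g p \<le> Liminf sequentially (\<lambda>k. g (P k))"
    by (rule lsc_fun_le_Liminf[OF lsc P])
  have upper: "g p \<le> g u + ereal (((norm (w - u))\<^sup>2 - (norm (w - p))\<^sup>2) / (2 * \<gamma>))" for u
  proof -
    have "Liminf sequentially (\<lambda>k. g (P k)) \<le> Liminf sequentially (\<lambda>k. g u + ereal (e u k))"
      using bound by (intro Liminf_mono) auto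
    also have "\<dots> = g u + ereal (((norm (w - u))\<^sup>2 - (norm (w - p))\<^sup>2) / (2 * \<gamma>))"
      by (rule lim_imp_Liminf[OF _ lim]) simp
    finally show ?thesis using liminf by simp
  qed
  then show "prox_point g \<gamma> w p"
    unfolding prox_point_def by (simp add: ereal_add_real_le_iff diff_divide_distrib)
  have "Limsup sequentially (\<lambda>k. g (P k)) \<le> Limsup sequentially (\<lambda>k. g p + ereal (e p k))"
    using bound by (intro Limsup_mono) auto
  also have "\<dots> = g p"
    using lim_imp_Limsup[OF _ lim[of p]] by simp
  finally have "Limsup sequentially (\<lambda>k. g (P k)) \<le> g p" .
  moreover have "Liminf sequentially (\<lambda>k. g (P k)) \<le> Limsup sequentially (\<lambda>k. g (P k))"
    by (simp add: Liminf_le_Limsup)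
  ultimately show "(\<lambda>k. g (P k)) \<longlonglongrightarrow> g p"
    using liminf by (intro Liminf_eq_Limsup) auto
qed

lemma limiting_subdiff_prox_limit:
  fixes g :: "'a::real_inner \<Rightarrow> ereal"
  assumes "proper_fun g" "lsc_fun g" "\<gamma> > 0"
    and W: "W \<longlonglongrightarrow> w" and P: "P \<longlonglongrightarrow> p" and prox: "\<And>k. prox_point g \<gamma> (W k) (P k)"
  shows "(1 / \<gamma>) *\<^sub>R (w - p) \<in> limiting_subdiff g p"
  unfolding limiting_subdiff_def mem_Collect_eq
proof (intro conjI exI)
  show "\<bar>g p\<bar> \<noteq> \<infinity>"
    by (rule prox_point_finite[OF assms(1) prox_point_limit(1)[OF assms(2,3) W P prox]])
  show "(\<lambda>k. g (P k)) \<longlonglongrightarrow> g p"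
    by (rule prox_point_limit(2)[OF assms(2,3) W P prox])
  show "(\<lambda>k. (1 / \<gamma>) *\<^sub>R (W k - P k)) \<longlonglongrightarrow> (1 / \<gamma>) *\<^sub>R (w - p)"
    by (intro tendsto_intros W P)
  show "\<forall>k. frechet_subgrad g (P k) ((1 / \<gamma>) *\<^sub>R (W k - P k))"
    using frechet_subgrad_prox_point[OF assms(1,3) prox] by blast
qed (rule P)

locale pr_splitting =
  fixes f :: "'a::real_inner \<Rightarrow> real" and gf :: "'a \<Rightarrow> 'a" and g :: "'a \<Rightarrow> ereal"
    and \<sigma> L \<gamma> :: real and y z x :: "nat \<Rightarrow> 'a"
  assumes grad: "\<And>u. (f has_derivative (\<lambda>h. gf u \<bullet> h)) (at u)"
    and strong_convex: "convex_on UNIV (\<lambda>u. f u - \<sigma> / 2 * (norm u)\<^sup>2)"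
    and lipschitz: "\<And>u v. norm (gf u - gf v) \<le> L * norm (u - v)"
    and g_proper: "proper_fun g"
    and g_lsc: "lsc_fun g"
    and gamma_pos: "\<gamma> > 0"
    and step_size: "\<gamma> * L\<^sup>2 < \<sigma>"
    and y_step: "\<And>t u. f (y (Suc t)) + (norm (y (Suc t) - x t))\<^sup>2 / (2 * \<gamma>)
                        \<le> f u + (norm (u - x t))\<^sup>2 / (2 * \<gamma>)"
    and z_step: "\<And>t. prox_point g \<gamma> (2 *\<^sub>R y (Suc t) - x t) (z (Suc t))"
    and x_step: "\<And>t. x (Suc t) = x t + 2 *\<^sub>R (z (Suc t) - y (Suc t))"
begin

lemma x_eq_gradient_step: "x t = y (Suc t) + \<gamma> *\<^sub>R gf (y (Suc t))"
  by (rule proximal_step_optimality[OF grad gamma_pos y_step])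

lemma z_step_reflected: "prox_point g \<gamma> (y (Suc t) - \<gamma> *\<^sub>R gf (y (Suc t))) (z (Suc t))"
  using z_step[of t] unfolding x_eq_gradient_step[of t] by (simp add: scaleR_2 algebra_simps)

lemma z_eq_average:
  "z (Suc t) = (1/2) *\<^sub>R (y (Suc (Suc t)) + y (Suc t))
     + (\<gamma>/2) *\<^sub>R (gf (y (Suc (Suc t))) - gf (y (Suc t)))"
proof -
  have "2 *\<^sub>R z (Suc t) = x (Suc t) - x t + 2 *\<^sub>R y (Suc t)"
    using x_step[of t] by (simp add: algebra_simps)
  also have "\<dots> = 2 *\<^sub>R ((1/2) *\<^sub>R (y (Suc (Suc t)) + y (Suc t))
      + (\<gamma>/2) *\<^sub>R (gf (y (Suc (Suc t))) - gf (y (Suc t))))"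
    unfolding x_eq_gradient_step[of t] x_eq_gradient_step[of "Suc t"]
    by (simp add: algebra_simps scaleR_2)
  finally show ?thesis by simp
qed

definition gz :: "nat \<Rightarrow> real" where
  "gz t = real_of_ereal (g (z t))"

lemma g_z_eq: "g (z (Suc t)) = ereal (gz (Suc t))"
  using prox_point_finite[OF g_proper z_step[of t]] unfolding gz_def by auto

definition merit_seq :: "nat \<Rightarrow> real" where
  "merit_seq t = f (y t) + gz t + merit_coupling \<gamma> (y t) (z t) (x t)"

lemma merit_eq_merit_seq: "merit f g \<gamma> (y (Suc t)) (z (Suc t)) (x (Suc t)) = ereal (merit_seq (Suc t))"
  by (simp add: merit_eq_coupling merit_seq_def g_z_eq)

lemma merit_seq_descent:
  "merit_seq (Suc (Suc t)) + (\<sigma> - \<gamma> * L\<^sup>2) / 2 * (norm (y (Suc (Suc t)) - y (Suc t)))\<^sup>2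
     \<le> merit_seq (Suc t)"
proof -
  define a a0 where "a = y (Suc (Suc t))" and "a0 = y (Suc t)"
  define ga ga0 where "ga = gf a" and "ga0 = gf a0"
  define b b0 where "b = z (Suc (Suc t))" and "b0 = z (Suc t)"
  have xa: "x (Suc t) = a + \<gamma> *\<^sub>R ga"
    unfolding a_def ga_def by (rule x_eq_gradient_step)
  have b0_avg: "b0 = (1/2) *\<^sub>R (a + a0) + (\<gamma>/2) *\<^sub>R (ga - ga0)"
    unfolding a_def a0_def b0_def ga_def ga0_def by (rule z_eq_average)
  have x_next: "x (Suc (Suc t)) = a + \<gamma> *\<^sub>R ga + 2 *\<^sub>R (b - a)"
    using x_step[of "Suc t"] unfolding xa a_def b_def .
  have seq_next: "merit_seq (Suc (Suc t)) = f a + gz (Suc (Suc t)) + merit_coupling \<gamma> a b (x (Suc (Suc t)))"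
    unfolding merit_seq_def a_def b_def ..
  have seq_cur: "merit_seq (Suc t) = f a0 + gz (Suc t) + merit_coupling \<gamma> a0 b0 (x (Suc t))"
    unfolding merit_seq_def a0_def b0_def ..
  have prox: "gz (Suc (Suc t)) + (norm (a - \<gamma> *\<^sub>R ga - b))\<^sup>2 / (2 * \<gamma>)
      \<le> gz (Suc t) + (norm (a - \<gamma> *\<^sub>R ga - b0))\<^sup>2 / (2 * \<gamma>)"
    using z_step_reflected[of "Suc t", unfolded prox_point_def, rule_format, of b0]
    unfolding a_def ga_def b_def b0_def g_z_eq by simp
  have "merit_seq (Suc (Suc t))
      = f a + gz (Suc (Suc t)) + (norm (a - \<gamma> *\<^sub>R ga - b))\<^sup>2 / (2 * \<gamma>) - \<gamma> / 2 * (norm ga)\<^sup>2"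
    unfolding seq_next x_next merit_coupling_after_step[OF gamma_pos] by simp
  also have "\<dots> \<le> f a + gz (Suc t) + (norm (a - \<gamma> *\<^sub>R ga - b0))\<^sup>2 / (2 * \<gamma>) - \<gamma> / 2 * (norm ga)\<^sup>2"
    using prox by simp
  also have "\<dots> = merit_seq (Suc t) + (f a - f a0 - ga \<bullet> (a - a0)) + \<gamma> / 2 * (norm (ga - ga0))\<^sup>2"
    unfolding seq_cur xa b0_avg merit_coupling_at_average[OF gamma_pos] by simp
  also have "\<dots> \<le> merit_seq (Suc t) - \<sigma> / 2 * (norm (a - a0))\<^sup>2 + \<gamma> * L\<^sup>2 / 2 * (norm (a - a0))\<^sup>2"
  proof -
    have "f a + ga \<bullet> (a0 - a) + \<sigma> / 2 * (norm (a0 - a))\<^sup>2 \<le> f a0"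
      unfolding ga_def by (rule strongly_convex_gradient_ineq[OF grad strong_convex])
    moreover have "\<gamma> / 2 * (norm (ga - ga0))\<^sup>2 \<le> \<gamma> / 2 * (L * norm (a - a0))\<^sup>2"
      unfolding ga_def ga0_def using gamma_pos by (intro mult_left_mono power_mono lipschitz) auto
    ultimately show ?thesis
      by (simp add: norm_minus_commute inner_diff_right power_mult_distrib)
  qed
  finally show ?thesis unfolding a_def a0_def by (simp add: field_simps)
qed


lemma merit_seq_Suc_le: "merit_seq (Suc (Suc t)) \<le> merit_seq (Suc t)"
proof -
  have "0 \<le> (\<sigma> - \<gamma> * L\<^sup>2) / 2 * (norm (y (Suc (Suc t)) - y (Suc t)))\<^sup>2"
    using step_size by simp
  then show ?thesis using merit_seq_descent[of t] by linarith
qed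

lemma merit_seq_antimono:
  assumes "1 \<le> t" "t \<le> m"
  shows "merit_seq m \<le> merit_seq t"
  using assms(2)
proof (induction m rule: dec_induct)
  case (step m)
  then obtain s where "m = Suc s" using assms(1) by (cases m) auto
  with step show ?case using merit_seq_Suc_le[of s] by simp
qed simp

lemma f_tendsto: "X \<longlonglongrightarrow> u \<Longrightarrow> (\<lambda>k. f (X k)) \<longlonglongrightarrow> f u"
  by (rule isCont_tendsto_compose[OF has_derivative_continuous[OF grad]])

lemma merit_seq_bounded_below:
  assumes r: "strict_mono r"
    and yr: "(\<lambda>k. y (r k)) \<longlonglongrightarrow> ys" and zr: "(\<lambda>k. z (r k)) \<longlonglongrightarrow> zs"
    and xr: "(\<lambda>k. x (r k)) \<longlonglongrightarrow> xs"
  shows "\<exists>B. \<forall>t. B \<le> merit_seq (Suc t)"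
proof -
  obtain c where "ereal c < g zs"
  proof (cases "g zs")
    case (real a)
    then show ?thesis by (intro that[of "a - 1"]) simp
  next
    case PInf
    then show ?thesis by (intro that[of 0]) simp
  next
    case MInf
    then show ?thesis using g_proper by (simp add: proper_fun_def)
  qed
  then obtain N where N: "\<And>k. N \<le> k \<Longrightarrow> ereal c < g (z (r k))"
    using lsc_fun_eventually_gt[OF g_lsc _ zr] unfolding eventually_sequentially by blast
  have "(\<lambda>k. f (y (r k)) + merit_coupling \<gamma> (y (r k)) (z (r k)) (x (r k)))
      \<longlonglongrightarrow> f ys + merit_coupling \<gamma> ys zs xs"
    unfolding merit_coupling_def by (intro tendsto_intros f_tendsto yr zr xr)
  then have "Bseq (\<lambda>k. f (y (r k)) + merit_coupling \<gamma> (y (r k)) (z (r k)) (x (r k)))"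
    by (rule convergent_imp_Bseq[OF convergentI])
  then obtain K where K: "\<forall>k. \<bar>f (y (r k)) + merit_coupling \<gamma> (y (r k)) (z (r k)) (x (r k))\<bar> \<le> K"
    by (auto elim!: BseqE)
  have "c - K \<le> merit_seq (Suc t)" for t
  proof -
    define k where "k = Suc t + N"
    have "Suc t \<le> r k" using seq_suble[OF r, of k] by (simp add: k_def)
    then obtain s where s: "r k = Suc s" by (cases "r k") auto
    have "c < gz (r k)" using N[of k] unfolding s g_z_eq by (simp add: k_def)
    then have "c - K \<le> merit_seq (r k)"
      using K[rule_format, of k] unfolding merit_seq_def by (simp add: abs_le_iff)
    also have "\<dots> \<le> merit_seq (Suc t)"
      using \<open>Suc t \<le> r k\<close> by (intro merit_seq_antimono) auto
    finally show ?thesis .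
  qed
  then show ?thesis by blast
qed

lemma y_diff_tendsto_zero:
  assumes bounded: "\<And>t. B \<le> merit_seq (Suc t)"
  shows "(\<lambda>t. y (Suc (Suc t)) - y (Suc t)) \<longlonglongrightarrow> 0"
proof -
  define c where "c = (\<sigma> - \<gamma> * L\<^sup>2) / 2"
  define d where "d t = (norm (y (Suc (Suc t)) - y (Suc t)))\<^sup>2" for t
  have c: "c > 0" using step_size by (simp add: c_def)
  have telescope: "(\<Sum>i<n. c * d i) \<le> merit_seq 1 - merit_seq (Suc n)" for n
  proof (induction n)
    case (Suc n)
    then show ?case using merit_seq_descent[of n] by (simp add: c_def d_def)
  qed simp
  have "summable (\<lambda>i. c * d i)"
  proof (rule summableI_nonneg_bounded)
    show "(\<Sum>i<n. c * d i) \<le> merit_seq 1 - B" for n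
      using telescope[of n] bounded[of n] by simp
  qed (use c in \<open>simp add: d_def\<close>)
  then have "(\<lambda>i. (1 / c) * (c * d i)) \<longlonglongrightarrow> 0"
    by (intro tendsto_mult_right_zero summable_LIMSEQ_zero)
  then have "(\<lambda>i. sqrt (d i)) \<longlonglongrightarrow> sqrt 0"
    using c by (intro tendsto_real_sqrt) simp
  then have "(\<lambda>i. norm (y (Suc (Suc i)) - y (Suc i))) \<longlonglongrightarrow> 0"
    by (simp add: d_def)
  then show ?thesis
    unfolding tendsto_norm_zero_iff .
qed

lemma z_y_diff_le:
  "norm (z (Suc t) - y (Suc t)) \<le> (1 + \<gamma> * L) / 2 * norm (y (Suc (Suc t)) - y (Suc t))"
proof -
  let ?new = "y (Suc (Suc t))" and ?old = "y (Suc t)"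
  have "x (Suc t) - x t = (?new - ?old) + \<gamma> *\<^sub>R (gf ?new - gf ?old)"
    using x_eq_gradient_step[of t] x_eq_gradient_step[of "Suc t"] by (simp add: algebra_simps)
  then have "2 *\<^sub>R (z (Suc t) - ?old) = (?new - ?old) + \<gamma> *\<^sub>R (gf ?new - gf ?old)"
    using x_step[of t] by simp
  then have "2 * norm (z (Suc t) - ?old) = norm ((?new - ?old) + \<gamma> *\<^sub>R (gf ?new - gf ?old))"
    by (metis norm_scaleR abs_numeral real_scaleR_def)
  also have "\<dots> \<le> norm (?new - ?old) + \<gamma> * norm (gf ?new - gf ?old)"
    using norm_triangle_ineq[of "?new - ?old" "\<gamma> *\<^sub>R (gf ?new - gf ?old)"] gamma_pos by simp
  also have "\<dots> \<le> norm (?new - ?old) + \<gamma> * (L * norm (?new - ?old))"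
    using gamma_pos lipschitz by (simp add: mult_left_mono)
  finally show ?thesis by (simp add: field_simps)
qed

lemma z_y_diff_tendsto_zero:
  assumes "\<And>t. B \<le> merit_seq (Suc t)"
  shows "(\<lambda>t. z (Suc t) - y (Suc t)) \<longlonglongrightarrow> 0"
proof (rule Lim_null_comparison)
  show "eventually (\<lambda>t. norm (z (Suc t) - y (Suc t))
      \<le> (1 + \<gamma> * L) / 2 * norm (y (Suc (Suc t)) - y (Suc t))) sequentially"
    using z_y_diff_le by simp
  show "(\<lambda>t. (1 + \<gamma> * L) / 2 * norm (y (Suc (Suc t)) - y (Suc t))) \<longlonglongrightarrow> 0"
    by (intro tendsto_mult_right_zero tendsto_norm_zero y_diff_tendsto_zero[OF assms])
qed

lemma cluster_point_consensus:
  assumes r: "strict_mono r"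
    and yr: "(\<lambda>k. y (r k)) \<longlonglongrightarrow> ys" and zr: "(\<lambda>k. z (r k)) \<longlonglongrightarrow> zs"
    and xr: "(\<lambda>k. x (r k)) \<longlonglongrightarrow> xs"
  shows "(\<lambda>t. z (Suc t) - y (Suc t)) \<longlonglongrightarrow> 0" and "zs = ys"
proof -
  obtain B where "\<And>t. B \<le> merit_seq (Suc t)"
    using merit_seq_bounded_below[OF r yr zr xr] by blast
  then show zy: "(\<lambda>t. z (Suc t) - y (Suc t)) \<longlonglongrightarrow> 0" by (rule z_y_diff_tendsto_zero)
  have "(\<lambda>k. z (r k) - y (r k)) \<longlonglongrightarrow> 0"
    using LIMSEQ_subseq_LIMSEQ[OF LIMSEQ_imp_Suc[OF zy] r] by (simp add: comp_def)
  moreover have "(\<lambda>k. z (r k) - y (r k)) \<longlonglongrightarrow> zs - ys" by (intro tendsto_diff zr yr)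
  ultimately show "zs = ys" using LIMSEQ_unique by fastforce
qed

lemma cluster_point_stationary:
  assumes r: "strict_mono r"
    and yr: "(\<lambda>k. y (r k)) \<longlonglongrightarrow> p" and zr: "(\<lambda>k. z (r k)) \<longlonglongrightarrow> p"
  shows "- gf p \<in> limiting_subdiff g p"
proof -
  define s where "s k = r (Suc k) - 1" for k
  have rs: "r (Suc k) = Suc (s k)" for k
    using seq_suble[OF r, of "Suc k"] by (simp add: s_def)
  have ys: "(\<lambda>k. y (Suc (s k))) \<longlonglongrightarrow> p" using LIMSEQ_Suc[OF yr] unfolding rs .
  have zs: "(\<lambda>k. z (Suc (s k))) \<longlonglongrightarrow> p" using LIMSEQ_Suc[OF zr] unfolding rs .
  have "(\<lambda>k. y (Suc (s k)) - \<gamma> *\<^sub>R gf (y (Suc (s k)))) \<longlonglongrightarrow> p - \<gamma> *\<^sub>R gf p"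
    by (intro tendsto_diff tendsto_scaleR tendsto_const ys lipschitz_tendsto[OF lipschitz ys])
  then have "(1 / \<gamma>) *\<^sub>R ((p - \<gamma> *\<^sub>R gf p) - p) \<in> limiting_subdiff g p"
    by (rule limiting_subdiff_prox_limit[OF g_proper g_lsc gamma_pos _ zs z_step_reflected])
  then show ?thesis using gamma_pos by simp
qed

end

theorem theorem1:
  fixes f :: "'a::euclidean_space \<Rightarrow> real" and gf :: "'a \<Rightarrow> 'a"
    and g :: "'a \<Rightarrow> ereal" and \<sigma> L \<gamma> :: real
    and y z x :: "nat \<Rightarrow> 'a"
  assumes grad: "\<And>u. (f has_derivative (\<lambda>h. gf u \<bullet> h)) (at u)"
    and sigma_pos: "\<sigma> > 0"
    and strong_convex: "convex_on UNIV (\<lambda>u. f u - \<sigma> / 2 * (norm u)\<^sup>2)"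
    and L_pos: "L > 0"
    and lipschitz: "\<And>u v. norm (gf u - gf v) \<le> L * norm (u - v)"
    and g_proper: "proper_fun g"
    and g_lsc: "lsc_fun g"
    and prox_nonempty: "\<And>w. \<exists>u. \<forall>v. ereal \<gamma> * g u + ereal ((norm (u - w))\<^sup>2 / 2)
                                   \<le> ereal \<gamma> * g v + ereal ((norm (v - w))\<^sup>2 / 2)"
    and sigma_L: "3 * \<sigma> > 2 * L"
    and gamma_pos: "\<gamma> > 0"
    and gamma_bound: "\<gamma> < (3 * \<sigma> - 2 * L) / L\<^sup>2"
    and y_step: "\<And>t u. f (y (Suc t)) + (norm (y (Suc t) - x t))\<^sup>2 / (2 * \<gamma>)
                        \<le> f u + (norm (u - x t))\<^sup>2 / (2 * \<gamma>)"
    and z_step: "\<And>t u. g (z (Suc t)) + ereal ((norm (2 *\<^sub>R y (Suc t) - x t - z (Suc t)))\<^sup>2 / (2 * \<gamma>))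
                        \<le> g u + ereal ((norm (2 *\<^sub>R y (Suc t) - x t - u))\<^sup>2 / (2 * \<gamma>))"
    and x_step: "\<And>t. x (Suc t) = x t + 2 *\<^sub>R (z (Suc t) - y (Suc t))"
  shows "(\<forall>t\<ge>1. merit f g \<gamma> (y (Suc t)) (z (Suc t)) (x (Suc t)) \<le> merit f g \<gamma> (y t) (z t) (x t))
    \<and> (\<forall>ys zs xs. (\<exists>r. strict_mono r \<and> (\<lambda>k. (y (r k), z (r k), x (r k))) \<longlonglongrightarrow> (ys, zs, xs)) \<longrightarrow>
          (\<lambda>t. norm (x (Suc t) - x t)) \<longlonglongrightarrow> 0
        \<and> (\<lambda>t. 2 * norm (z (Suc t) - y (Suc t))) \<longlonglongrightarrow> 0
        \<and> zs = ys
        \<and> 0 \<in> (\<lambda>v. gf zs + v) ` limiting_subdiff g zs)"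
proof -
  have "\<gamma> * L\<^sup>2 < \<sigma>"
  proof -
    have "\<sigma> \<le> L" by (rule strong_convexity_modulus_le_lipschitz[OF grad strong_convex lipschitz])
    moreover have "\<gamma> * L\<^sup>2 < 3 * \<sigma> - 2 * L" using gamma_bound L_pos by (simp add: field_simps)
    ultimately show ?thesis by linarith
  qed
  then interpret pr_splitting f gf g \<sigma> L \<gamma> y z x
    using assms by unfold_locales (auto simp: prox_point_def)
  have descent: "merit f g \<gamma> (y (Suc t)) (z (Suc t)) (x (Suc t)) \<le> merit f g \<gamma> (y t) (z t) (x t)"
    if "t \<ge> 1" for t
    using that merit_seq_Suc_le merit_eq_merit_seq by (cases t) auto
  have cluster: "(\<lambda>t. norm (x (Suc t) - x t)) \<longlonglongrightarrow> 0
        \<and> (\<lambda>t. 2 * norm (z (Suc t) - y (Suc t))) \<longlonglongrightarrow> 0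
        \<and> zs = ys \<and> 0 \<in> (\<lambda>v. gf zs + v) ` limiting_subdiff g zs"
    if r: "strict_mono r" and lim: "(\<lambda>k. (y (r k), z (r k), x (r k))) \<longlonglongrightarrow> (ys, zs, xs)" for r ys zs xs
  proof -
    have yr: "(\<lambda>k. y (r k)) \<longlonglongrightarrow> ys" and zr: "(\<lambda>k. z (r k)) \<longlonglongrightarrow> zs"
      and xr: "(\<lambda>k. x (r k)) \<longlonglongrightarrow> xs"
      using tendsto_fst[OF lim] tendsto_fst[OF tendsto_snd[OF lim]] tendsto_snd[OF tendsto_snd[OF lim]]
      by simp_all
    have "(\<lambda>t. 2 * norm (z (Suc t) - y (Suc t))) \<longlonglongrightarrow> 0"
      by (intro tendsto_mult_right_zero tendsto_norm_zero cluster_point_consensus(1)[OF r yr zr xr])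
    moreover have "zs = ys" by (rule cluster_point_consensus(2)[OF r yr zr xr])
    moreover have "- gf zs \<in> limiting_subdiff g zs"
      using cluster_point_stationary[OF r] yr zr \<open>zs = ys\<close> by simp
    ultimately show ?thesis
      using x_step by (auto intro: image_eqI[of _ _ "- gf zs"])
  qed
  show ?thesis using descent cluster by blast
qed

end
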